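(* Fix $p\in[1,2]$ and let $(X,\|\cdot\|_X)$ be a normed space of Rademacher type $p$. Then for every $n\in\mathbb N$, $\boldsymbol\alpha=(\alpha_1,\dots,\alpha_n)\in(0,1)^n$ and $f:\{-1,1\}^n\to X$, $$\int_{\{-1,1\}^n}\Big\|f(x)-\int f\,d\mu_{\boldsymbol\alpha}\Big\|_X^p\,d\mu_{\boldsymbol\alpha}(x)\le\big(2\pi\,\mathsf T_p(X)\big)^p\sum_{i=1}^n\int_{\{-1,1\}^n}\big\|\partial_i^{\alpha_i}f(x)\big\|_X^p\,d\mu_{\boldsymbol\alpha}(x).$$
   Context: $\mu_\alpha$ is the measure on $\{-1,1\}$ with $\mu_\alpha\{1\}=\alpha$, $\mu_\alpha\{-1\}=1-\alpha$, and $\mu_{\boldsymbol\alpha}=\mu_{\alpha_1}\otimes\cdots\otimes\mu_{\alpha_n}$. $\partial_i^\beta f(x)=f(x)-\beta f(x_1,\dots,x_{i-1},1,x_{i+1},\dots,x_n)-(1-\beta)f(x_1,\dots,x_{i-1},-1,x_{i+1},\dots,x_n)$. $\sigma_n$ is the uniform probability on $\{-1,1\}^n$; $\mathsf T_p(X)$ is the least $T$ such that $\int\|\sum_{i=1}^nx_iv_i\|_X^p\,d\sigma_n(x)\le T^p\sum_i\|v_i\|_X^p$ for all $n$ and $v_1,\dots,v_n\in X$; $X$ has Rademacher type $p$ if $\mathsf T_p(X)<\infty$. *)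

theory Defs
  imports "HOL-Analysis.Analysis"
begin

definition cube :: "nat \<Rightarrow> (nat \<Rightarrow> real) set" where
  "cube n = PiE {..<n} (\<lambda>_. {-1, 1})"

definition mu :: "(nat \<Rightarrow> real) \<Rightarrow> nat \<Rightarrow> (nat \<Rightarrow> real) \<Rightarrow> real" where
  "mu \<alpha> n x = (\<Prod>i<n. if x i = 1 then \<alpha> i else 1 - \<alpha> i)"

definition mu_int :: "(nat \<Rightarrow> real) \<Rightarrow> nat \<Rightarrow> ((nat \<Rightarrow> real) \<Rightarrow> 'a::real_normed_vector) \<Rightarrow> 'a" where
  "mu_int \<alpha> n f = (\<Sum>x\<in>cube n. mu \<alpha> n x *\<^sub>R f x)"

definition partial :: "nat \<Rightarrow> real \<Rightarrow> ((nat \<Rightarrow> real) \<Rightarrow> 'a::real_normed_vector) \<Rightarrow> (nat \<Rightarrow> real) \<Rightarrow> 'a" where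
  "partial i \<beta> f x = f x - \<beta> *\<^sub>R f (x(i := 1)) - (1 - \<beta>) *\<^sub>R f (x(i := -1))"

text \<open>Admissible constants in the Rademacher type p inequality (sigma_n uniform).\<close>
definition rad_type_consts :: "'a::real_normed_vector itself \<Rightarrow> real \<Rightarrow> real set" where
  "rad_type_consts _ p = {T. T \<ge> 0 \<and> (\<forall>n (v :: nat \<Rightarrow> 'a).
      (\<Sum>x\<in>cube n. norm (\<Sum>i<n. x i *\<^sub>R v i) powr p) / 2 ^ n
        \<le> T powr p * (\<Sum>i<n. norm (v i) powr p))}"

definition has_rad_type :: "'a::real_normed_vector itself \<Rightarrow> real \<Rightarrow> bool" where
  "has_rad_type A p \<longleftrightarrow> rad_type_consts A p \<noteq> {}"

definition rad_type_const :: "'a::real_normed_vector itself \<Rightarrow> real \<Rightarrow> real" where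
  "rad_type_const A p = Inf (rad_type_consts A p)"

end

theory Submission
  imports Defs
begin

text \<open>Let P_s, 0 \<le> s \<le> 1, be the tensor product of the operators s Id + (1 - s) E_{\<mu>_{\<alpha>_i}}, so
  that P_1 f = f and P_0 f is the mean of f, and f - \<integral> f d\<mu>_\<alpha> is the integral over [0, 1] of the
  derivative of P_s f. That derivative is a kernel average of \<Sum>_i Y_i \<partial>_i f with scores Y_i that
  have mean zero under the kernel. Decoupling, symmetrisation and the type p inequality, together
  with the reversibility of P_s with respect to \<mu>_\<alpha>, bound its L_p(\<mu>_\<alpha>) norm by
  2 T_p(X) (s (1 - s))^(-1/2) (\<Sum>_i \<parallel>\<partial>_i f\<parallel>_p^p)^(1/p), and the integral of (s (1 - s))^(-1/2) over
  [0, 1] is \<pi>. The integral is realised as a limit of Riemann sums, and T_p(X) as a limit of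
  admissible constants from above.\<close>

section \<open>Product measures on the discrete cube\<close>

lemma finite_cube [simp]: "finite (cube n)"
  unfolding cube_def by (simp add: finite_PiE)

lemma cube_coord: "x \<in> cube n \<Longrightarrow> i < n \<Longrightarrow> x i = 1 \<or> x i = -1"
  unfolding cube_def by (auto simp: PiE_iff)

lemma cube_eqI:
  assumes "x \<in> cube n" "y \<in> cube n" "\<And>i. i < n \<Longrightarrow> x i = y i"
  shows "x = y"
proof
  fix i
  show "x i = y i"
    using assms unfolding cube_def by (cases "i < n") (auto simp: PiE_iff extensional_def)
qed

lemma card_cube: "card (cube n) = 2 ^ n"
  unfolding cube_def by (auto simp: card_PiE numeral_2_eq_2)

lemma cube_flip: "x \<in> cube n \<Longrightarrow> i < n \<Longrightarrow> x(i := - x i) \<in> cube n"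
  unfolding cube_def by (auto simp: PiE_iff extensional_def)

lemma sum_cube_flip:
  assumes "i < n"
  shows "(\<Sum>x\<in>cube n. F x) = (\<Sum>x\<in>cube n. F (x(i := - x i)))"
  by (rule sum.reindex_bij_witness[of _ "\<lambda>x. x(i := - x i)" "\<lambda>x. x(i := - x i)"])
    (auto simp: cube_flip assms)

definition prod_weight :: "(nat \<Rightarrow> real \<Rightarrow> real) \<Rightarrow> nat \<Rightarrow> (nat \<Rightarrow> real) \<Rightarrow> real" where
  "prod_weight q n x = (\<Prod>i<n. q i (x i))"

definition coord_probs :: "nat \<Rightarrow> (nat \<Rightarrow> real \<Rightarrow> real) \<Rightarrow> bool" where
  "coord_probs n q \<longleftrightarrow> (\<forall>i<n. 0 \<le> q i 1 \<and> 0 \<le> q i (-1) \<and> q i 1 + q i (-1) = 1)"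

lemma sum_prod_weight_cube: "(\<Sum>x\<in>cube n. prod_weight q n x) = (\<Prod>i<n. q i 1 + q i (-1))"
proof -
  have "(\<Prod>i<n. q i 1 + q i (-1)) = (\<Prod>i<n. \<Sum>b\<in>{-1,1}. q i b)"
    by (simp add: add.commute)
  also have "\<dots> = (\<Sum>x\<in>cube n. \<Prod>i<n. q i (x i))"
    unfolding cube_def by (rule prod_sum_PiE) auto
  finally show ?thesis
    by (simp add: prod_weight_def)
qed

lemma prod_weight_nonneg: "coord_probs n q \<Longrightarrow> x \<in> cube n \<Longrightarrow> 0 \<le> prod_weight q n x"
  unfolding prod_weight_def coord_probs_def by (intro prod_nonneg) (metis cube_coord lessThan_iff)

lemma sum_prod_weight_eq_1: "coord_probs n q \<Longrightarrow> (\<Sum>x\<in>cube n. prod_weight q n x) = 1"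
  by (simp add: sum_prod_weight_cube coord_probs_def)

lemma sum_prod_weight_coord:
  assumes "coord_probs n q" "i < n"
  shows "(\<Sum>x\<in>cube n. prod_weight q n x * g (x i)) = q i 1 * g 1 + q i (-1) * g (-1)"
proof -
  define q' where "q' j b = q j b * (if j = i then g b else 1)" for j b
  have "(\<Sum>x\<in>cube n. prod_weight q n x * g (x i)) = (\<Sum>x\<in>cube n. prod_weight q' n x)"
    using assms(2) by (simp add: prod_weight_def q'_def prod.distrib prod.delta')
  also have "\<dots> = (\<Prod>j<n. if j = i then q i 1 * g 1 + q i (-1) * g (-1) else 1)"
    using assms(1) unfolding sum_prod_weight_cube coord_probs_def q'_def
    by (intro prod.cong) auto
  also have "\<dots> = q i 1 * g 1 + q i (-1) * g (-1)"
    using assms(2) by (simp add: prod.delta')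
  finally show ?thesis .
qed

lemma convex_on_powr_nonneg:
  assumes "1 \<le> p"
  shows "convex_on {0..} (\<lambda>x::real. x powr p)"
proof (rule convex_on_linorderI)
  fix t x y :: real
  assume t: "0 < t" "t < 1" and x: "x \<in> {0..}" and y: "y \<in> {0..}" and "x < y"
  show "((1 - t) *\<^sub>R x + t *\<^sub>R y) powr p \<le> (1 - t) * x powr p + t * y powr p"
  proof (cases "x = 0")
    case True
    have "t powr p \<le> t powr 1"
      using t assms by (intro powr_mono') auto
    then have "(t * y) powr p \<le> t * y powr p"
      using t y by (simp add: powr_mult mult_right_mono)
    then show ?thesis
      using True by simp
  next
    case False
    then show ?thesis
      using convex_onD[OF powr_convex[OF assms], of t x y] t x \<open>x < y\<close> by auto
  qed
qed (simp add: convex_real_interval)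

lemma norm_sum_powr_le:
  fixes u :: "'i \<Rightarrow> 'a::real_normed_vector"
  assumes "finite A" "\<And>a. a \<in> A \<Longrightarrow> 0 \<le> w a" "sum w A = 1" "1 \<le> p"
  shows "norm (\<Sum>a\<in>A. w a *\<^sub>R u a) powr p \<le> (\<Sum>a\<in>A. w a * norm (u a) powr p)"
proof -
  have "norm (\<Sum>a\<in>A. w a *\<^sub>R u a) \<le> (\<Sum>a\<in>A. w a * norm (u a))"
    using norm_sum[of "\<lambda>a. w a *\<^sub>R u a" A] assms(2) by simp
  then have "norm (\<Sum>a\<in>A. w a *\<^sub>R u a) powr p \<le> (\<Sum>a\<in>A. w a *\<^sub>R norm (u a)) powr p"
    using assms(4) by (intro powr_mono2) auto
  also have "\<dots> \<le> (\<Sum>a\<in>A. w a * norm (u a) powr p)"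
    using assms by (intro convex_on_sum[OF assms(1) _ convex_on_powr_nonneg]) auto
  finally show ?thesis .
qed

lemma abs_diff_powr_le:
  fixes a b :: real
  assumes "1 \<le> p"
  shows "\<bar>a - b\<bar> powr p \<le> 2 powr (p - 1) * (\<bar>a\<bar> powr p + \<bar>b\<bar> powr p)"
proof -
  have "\<bar>(a - b) / 2\<bar> powr p \<le> (\<bar>a\<bar> powr p + \<bar>b\<bar> powr p) / 2"
    using norm_sum_powr_le[of "UNIV :: bool set" "\<lambda>_. 1/2" p "\<lambda>t. if t then a else - b"] assms
    by (simp add: UNIV_bool field_simps)
  then show ?thesis
    by (simp add: powr_divide powr_diff field_simps)
qed

lemma norm_sum_powr_le_weighted:
  fixes u :: "'k \<Rightarrow> 'a::real_normed_vector"
  assumes K: "finite K" and c: "\<And>k. k \<in> K \<Longrightarrow> 0 < c k" and p: "1 \<le> p"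
  shows "norm (\<Sum>k\<in>K. u k) powr p \<le> (\<Sum>k\<in>K. c k) powr (p - 1) * (\<Sum>k\<in>K. c k powr (1 - p) * norm (u k) powr p)"
proof (cases "K = {}")
  case False
  define C where "C = sum c K"
  have C: "0 < C"
    unfolding C_def using K c False by (intro sum_pos) auto
  have "norm (\<Sum>k\<in>K. (c k / C) *\<^sub>R ((C / c k) *\<^sub>R u k)) powr p
      \<le> (\<Sum>k\<in>K. c k / C * norm ((C / c k) *\<^sub>R u k) powr p)"
    using K c C p
    by (intro norm_sum_powr_le) (auto simp: C_def sum_divide_distrib[symmetric] intro: divide_nonneg_pos less_imp_le)
  also have "\<dots> = C powr (p - 1) * (\<Sum>k\<in>K. c k powr (1 - p) * norm (u k) powr p)"
    unfolding sum_distrib_left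
  proof (intro sum.cong refl)
    fix k
    assume "k \<in> K"
    then have "0 < c k"
      by (rule c)
    then show "c k / C * norm ((C / c k) *\<^sub>R u k) powr p = C powr (p - 1) * (c k powr (1 - p) * norm (u k) powr p)"
      using C by (simp add: powr_mult powr_divide powr_diff field_simps)
  qed
  moreover have "(\<Sum>k\<in>K. (c k / C) *\<^sub>R ((C / c k) *\<^sub>R u k)) = (\<Sum>k\<in>K. u k)"
    using c C by (intro sum.cong refl) (simp add: less_imp_neq[symmetric])
  ultimately show ?thesis
    by (simp add: C_def)
qed simp

lemma Minkowski_powr_le:
  fixes u :: "'k \<Rightarrow> 'x \<Rightarrow> 'a::real_normed_vector"
  assumes A: "finite A" and K: "finite K" and w: "\<And>x. x \<in> A \<Longrightarrow> 0 \<le> w x" and p: "1 \<le> p"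
    and c: "\<And>k. k \<in> K \<Longrightarrow> 0 < c k"
    and bound: "\<And>k. k \<in> K \<Longrightarrow> (\<Sum>x\<in>A. w x * norm (u k x) powr p) \<le> c k powr p * B"
  shows "(\<Sum>x\<in>A. w x * norm (\<Sum>k\<in>K. u k x) powr p) \<le> (\<Sum>k\<in>K. c k) powr p * B"
proof -
  let ?C = "\<Sum>k\<in>K. c k"
  have "(\<Sum>x\<in>A. w x * norm (\<Sum>k\<in>K. u k x) powr p)
      \<le> (\<Sum>x\<in>A. w x * (?C powr (p - 1) * (\<Sum>k\<in>K. c k powr (1 - p) * norm (u k x) powr p)))"
    using w by (intro sum_mono mult_left_mono norm_sum_powr_le_weighted[OF K c p]) auto
  also have "\<dots> = ?C powr (p - 1) * (\<Sum>k\<in>K. c k powr (1 - p) * (\<Sum>x\<in>A. w x * norm (u k x) powr p))"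
    by (simp add: sum_distrib_left sum.swap[of _ A] mult_ac)
  also have "\<dots> \<le> ?C powr (p - 1) * (\<Sum>k\<in>K. c k powr (1 - p) * (c k powr p * B))"
    using bound by (intro mult_left_mono sum_mono) auto
  also have "\<dots> = ?C powr (p - 1) * ?C * B"
  proof -
    have "(\<Sum>k\<in>K. c k powr (1 - p) * (c k powr p * B)) = (\<Sum>k\<in>K. c k * B)"
    proof (intro sum.cong refl)
      fix k
      assume "k \<in> K"
      then show "c k powr (1 - p) * (c k powr p * B) = c k * B"
        using c[of k] by (simp add: mult.assoc[symmetric] powr_add[symmetric])
    qed
    then show ?thesis
      by (simp add: sum_distrib_right mult.assoc)
  qed
  also have "\<dots> = ?C powr p * B"
  proof -
    have "0 \<le> ?C"
      using c by (simp add: sum_nonneg less_imp_le)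
    then show ?thesis
      by (cases "?C = 0") (simp_all add: powr_diff)
  qed
  finally show ?thesis .
qed

lemma powr_conjugate_pair_le_1:
  fixes s r :: real
  assumes "0 < s" "s < 1" "0 \<le> r" "r \<le> 1"
  shows "s powr (1 - r) * (1 - s) powr r + s powr r * (1 - s) powr (1 - r) \<le> 1"
proof -
  have "s powr (1 - r) * (1 - s) powr r \<le> (1 - r) * s + r * (1 - s)"
    using Youngs_inequality_0[of "1 - r" r s "1 - s"] assms by auto
  moreover have "s powr r * (1 - s) powr (1 - r) \<le> r * s + (1 - r) * (1 - s)"
    using Youngs_inequality_0[of r "1 - r" s "1 - s"] assms by auto
  ultimately show ?thesis
    by (simp add: algebra_simps)
qed

lemma powr_one_minus_add_le:
  fixes s p :: real
  assumes s: "0 < s" "s < 1" and p: "0 \<le> p" "p \<le> 2"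
  shows "s powr (1 - p) + (1 - s) powr (1 - p) \<le> (1 / sqrt (s * (1 - s))) powr p"
proof -
  define r where "r = p / 2"
  have r: "0 \<le> r" "r \<le> 1"
    using p unfolding r_def by auto
  have "1 / sqrt (s * (1 - s)) = (s * (1 - s)) powr (- (1/2))"
    using s by (simp add: powr_minus_divide powr_half_sqrt)
  then have "(1 / sqrt (s * (1 - s))) powr p = s powr (- r) * (1 - s) powr (- r)"
    using s by (simp add: powr_powr powr_mult r_def)
  moreover have "s powr (1 - p) + (1 - s) powr (1 - p)
      = (s powr (1 - r) * (1 - s) powr r + s powr r * (1 - s) powr (1 - r)) * (s powr (- r) * (1 - s) powr (- r))"
    using s by (simp add: algebra_simps powr_add[symmetric] r_def)
  ultimately show ?thesis
    using powr_conjugate_pair_le_1[OF s r] by (auto intro!: mult_left_le_one_le)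
qed

lemma two_point_moment_le:
  fixes s m p :: real
  assumes s: "0 < s" "s < 1" and m: "0 < m" "m < 1" and p: "1 \<le> p" "p \<le> 2"
  shows "(s + (1 - s) * m) * \<bar>(1 - m) / (s + (1 - s) * m)\<bar> powr p
      + (1 - s) * (1 - m) * \<bar>- 1 / (1 - s)\<bar> powr p \<le> (1 / sqrt (s * (1 - s))) powr p"
proof -
  define a where "a = s + (1 - s) * m"
  have a: "s \<le> a"
    using s m unfolding a_def by simp
  have "a * \<bar>(1 - m) / a\<bar> powr p = a powr (1 - p) * (1 - m) powr p"
    using a s m by (simp add: powr_divide powr_diff field_simps)
  also have "\<dots> \<le> s powr (1 - p) * 1"
    using a s m p by (intro mult_mono powr_mono2' powr_le1) auto
  finally have 1: "a * \<bar>(1 - m) / a\<bar> powr p \<le> s powr (1 - p)"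
    by simp
  have "(1 - s) * (1 - m) * \<bar>- 1 / (1 - s)\<bar> powr p = (1 - m) * (1 - s) powr (1 - p)"
    using s by (simp add: powr_divide powr_diff field_simps)
  also have "\<dots> \<le> (1 - s) powr (1 - p)"
    using m by (intro mult_left_le_one_le) auto
  finally show ?thesis
    using 1 powr_one_minus_add_le[OF s, of p] p unfolding a_def by linarith
qed

section \<open>Type p inequality for mean-zero product sums\<close>

lemma rad_type_constsD:
  assumes "T \<in> rad_type_consts TYPE('a::real_normed_vector) p"
  shows "0 \<le> T"
    and "(\<Sum>x\<in>cube n. norm (\<Sum>i<n. x i *\<^sub>R (v i :: 'a)) powr p) / 2 ^ n
           \<le> T powr p * (\<Sum>i<n. norm (v i) powr p)"
  using assms unfolding rad_type_consts_def by blast+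

definition coord_swap :: "(nat \<Rightarrow> real) \<Rightarrow> (nat \<Rightarrow> real) \<times> (nat \<Rightarrow> real) \<Rightarrow> (nat \<Rightarrow> real) \<times> (nat \<Rightarrow> real)"
  where "coord_swap e z =
    ((\<lambda>i. if e i = 1 then fst z i else snd z i), (\<lambda>i. if e i = 1 then snd z i else fst z i))"

lemma coord_swap_mem:
  assumes "z \<in> cube n \<times> cube n"
  shows "coord_swap e z \<in> cube n \<times> cube n"
proof -
  have "(\<lambda>i. if e i = 1 then x i else y i) \<in> cube n" if "x \<in> cube n" "y \<in> cube n" for x y
    using that unfolding cube_def PiE_iff extensional_def by auto
  then show ?thesis
    using assms unfolding coord_swap_def by (auto simp: mem_Times_iff)
qed

lemma coord_swap_coord_swap [simp]: "coord_swap e (coord_swap e z) = z"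
  unfolding coord_swap_def by (simp add: prod_eq_iff fun_eq_iff)

lemma prod_weight_coord_swap:
  "prod_weight q n (fst (coord_swap e z)) * prod_weight q n (snd (coord_swap e z))
    = prod_weight q n (fst z) * prod_weight q n (snd z)"
  unfolding prod_weight_def coord_swap_def prod.distrib[symmetric] by (intro prod.cong) auto

lemma sum_coord_swap:
  "(\<Sum>z\<in>cube n \<times> cube n. F z) = (\<Sum>z\<in>cube n \<times> cube n. F (coord_swap e z))"
  by (rule sum.reindex_bij_witness[of _ "coord_swap e" "coord_swap e"]) (auto simp: coord_swap_mem)

text \<open>Jensen in the second copy y, which averages each Y i (y i) to zero.\<close>
lemma decoupling_powr_le:
  fixes v :: "nat \<Rightarrow> 'a::real_normed_vector"
  assumes p: "1 \<le> p" and q: "coord_probs n q"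
    and mean0: "\<And>i. i < n \<Longrightarrow> q i 1 * Y i 1 + q i (-1) * Y i (-1) = 0"
  shows "(\<Sum>x\<in>cube n. prod_weight q n x * norm (\<Sum>i<n. Y i (x i) *\<^sub>R v i) powr p)
    \<le> (\<Sum>(x, y)\<in>cube n \<times> cube n. prod_weight q n x * prod_weight q n y *
          norm (\<Sum>i<n. (Y i (x i) - Y i (y i)) *\<^sub>R v i) powr p)"
proof -
  let ?w = "prod_weight q n"
  let ?D = "\<lambda>x y. \<Sum>i<n. (Y i (x i) - Y i (y i)) *\<^sub>R v i"
  have avg: "(\<Sum>i<n. Y i (x i) *\<^sub>R v i) = (\<Sum>y\<in>cube n. ?w y *\<^sub>R ?D x y)" for x
  proof -
    have "(\<Sum>y\<in>cube n. ?w y *\<^sub>R ?D x y) = (\<Sum>i<n. (\<Sum>y\<in>cube n. ?w y * (Y i (x i) - Y i (y i))) *\<^sub>R v i)"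
      by (simp add: scaleR_sum_right scaleR_sum_left sum.swap[of _ "cube n"])
    also have "\<dots> = (\<Sum>i<n. Y i (x i) *\<^sub>R v i)"
      using sum_prod_weight_eq_1[OF q] sum_prod_weight_coord[OF q, of _ "Y _"] mean0
      by (intro sum.cong) (simp_all add: right_diff_distrib sum_subtractf sum_distrib_right[symmetric])
    finally show ?thesis ..
  qed
  have "(\<Sum>x\<in>cube n. ?w x * norm (\<Sum>i<n. Y i (x i) *\<^sub>R v i) powr p)
      \<le> (\<Sum>x\<in>cube n. ?w x * (\<Sum>y\<in>cube n. ?w y * norm (?D x y) powr p))"
    unfolding avg using p prod_weight_nonneg[OF q] sum_prod_weight_eq_1[OF q]
    by (intro sum_mono mult_left_mono norm_sum_powr_le) auto
  also have "\<dots> = (\<Sum>(x, y)\<in>cube n \<times> cube n. ?w x * ?w y * norm (?D x y) powr p)"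
    by (simp add: sum.cartesian_product[symmetric] sum_distrib_left mult.assoc)
  finally show ?thesis .
qed

text \<open>Swapping the coordinates of the two copies along the signs e preserves the pair measure,
  which turns the decoupled sum into an average of Rademacher sums.\<close>
lemma rad_type_decoupled_le:
  fixes v :: "nat \<Rightarrow> 'a::real_normed_vector"
  assumes T: "T \<in> rad_type_consts TYPE('a) p" and q: "coord_probs n q"
  shows "(\<Sum>(x, y)\<in>cube n \<times> cube n. prod_weight q n x * prod_weight q n y *
          norm (\<Sum>i<n. (Y i (x i) - Y i (y i)) *\<^sub>R v i) powr p)
    \<le> T powr p * (\<Sum>i<n. norm (v i) powr p * (\<Sum>(x, y)\<in>cube n \<times> cube n.
          prod_weight q n x * prod_weight q n y * \<bar>Y i (x i) - Y i (y i)\<bar> powr p))"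
proof -
  define W where "W z = prod_weight q n (fst z) * prod_weight q n (snd z)" for z
  define D where "D z i = Y i (fst z i) - Y i (snd z i)" for z i
  define \<Psi> where "\<Psi> e z = norm (\<Sum>i<n. e i *\<^sub>R (D z i *\<^sub>R v i)) powr p" for e z
  have W_nonneg: "z \<in> cube n \<times> cube n \<Longrightarrow> 0 \<le> W z" for z
    unfolding W_def using prod_weight_nonneg[OF q] by auto
  have swap: "W (coord_swap e z) * norm (\<Sum>i<n. D (coord_swap e z) i *\<^sub>R v i) powr p = W z * \<Psi> e z"
    if e: "e \<in> cube n" for e z
  proof -
    have "(\<Sum>i<n. D (coord_swap e z) i *\<^sub>R v i) = (\<Sum>i<n. e i *\<^sub>R (D z i *\<^sub>R v i))"
      unfolding D_def coord_swap_def
      by (intro sum.cong refl) (auto simp: algebra_simps dest!: cube_coord[OF e])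
    then show ?thesis
      unfolding \<Psi>_def W_def prod_weight_coord_swap by simp
  qed
  have swapped: "(\<Sum>z\<in>cube n \<times> cube n. W z * \<Psi> e z)
      = (\<Sum>z\<in>cube n \<times> cube n. W z * norm (\<Sum>i<n. D z i *\<^sub>R v i) powr p)" if "e \<in> cube n" for e
    using sum_coord_swap[where F = "\<lambda>z. W z * norm (\<Sum>i<n. D z i *\<^sub>R v i) powr p" and e = e] swap[OF that]
    by simp
  have "(\<Sum>z\<in>cube n \<times> cube n. W z * norm (\<Sum>i<n. D z i *\<^sub>R v i) powr p)
      = (\<Sum>e\<in>cube n. \<Sum>z\<in>cube n \<times> cube n. W z * \<Psi> e z) / 2 ^ n"
    by (simp add: swapped card_cube)
  also have "\<dots> = (\<Sum>z\<in>cube n \<times> cube n. W z * ((\<Sum>e\<in>cube n. \<Psi> e z) / 2 ^ n))"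
    by (subst sum.swap) (simp add: sum_distrib_left sum_divide_distrib)
  also have "\<dots> \<le> (\<Sum>z\<in>cube n \<times> cube n. W z * (T powr p * (\<Sum>i<n. norm (D z i *\<^sub>R v i) powr p)))"
    unfolding \<Psi>_def by (intro sum_mono mult_left_mono W_nonneg rad_type_constsD(2)[OF T])
  also have "\<dots> = T powr p * (\<Sum>z\<in>cube n \<times> cube n. \<Sum>i<n. norm (v i) powr p * (W z * \<bar>D z i\<bar> powr p))"
    by (simp add: sum_distrib_left powr_mult mult_ac)
  also have "\<dots> = T powr p * (\<Sum>i<n. norm (v i) powr p * (\<Sum>z\<in>cube n \<times> cube n. W z * \<bar>D z i\<bar> powr p))"
    by (subst sum.swap) (simp add: sum_distrib_left)
  finally show ?thesis
    by (simp only: W_def D_def split_def)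
qed

lemma pair_moment_le:
  assumes p: "1 \<le> p" and q: "coord_probs n q" and i: "i < n"
  shows "(\<Sum>(x, y)\<in>cube n \<times> cube n. prod_weight q n x * prod_weight q n y * \<bar>g (x i) - g (y i)\<bar> powr p)
    \<le> 2 powr p * (q i 1 * \<bar>g 1\<bar> powr p + q i (-1) * \<bar>g (-1)\<bar> powr p)"
proof -
  let ?w = "prod_weight q n"
  let ?m = "q i 1 * \<bar>g 1\<bar> powr p + q i (-1) * \<bar>g (-1)\<bar> powr p"
  have "(\<Sum>(x, y)\<in>cube n \<times> cube n. ?w x * ?w y * \<bar>g (x i) - g (y i)\<bar> powr p)
      \<le> (\<Sum>(x, y)\<in>cube n \<times> cube n. ?w x * ?w y * (2 powr (p - 1) * (\<bar>g (x i)\<bar> powr p + \<bar>g (y i)\<bar> powr p)))"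
    using prod_weight_nonneg[OF q] p
    by (intro sum_mono) (auto intro!: mult_left_mono abs_diff_powr_le)
  also have "\<dots> = 2 powr (p - 1) *
      ((\<Sum>x\<in>cube n. ?w x * \<bar>g (x i)\<bar> powr p) * (\<Sum>y\<in>cube n. ?w y)
       + (\<Sum>x\<in>cube n. ?w x) * (\<Sum>y\<in>cube n. ?w y * \<bar>g (y i)\<bar> powr p))"
    unfolding sum_product sum.cartesian_product[symmetric]
    by (simp add: sum_distrib_left sum.distrib distrib_left mult_ac)
  also have "\<dots> = 2 powr (p - 1) * (?m + ?m)"
    using sum_prod_weight_eq_1[OF q] sum_prod_weight_coord[OF q i, of "\<lambda>b. \<bar>g b\<bar> powr p"] by simp
  also have "\<dots> = 2 powr p * ?m"
    by (simp add: powr_diff)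
  finally show ?thesis .
qed

lemma rad_type_mean_zero_coords:
  fixes v :: "nat \<Rightarrow> 'a::real_normed_vector"
  assumes p: "1 \<le> p" and T: "T \<in> rad_type_consts TYPE('a) p" and q: "coord_probs n q"
    and mean0: "\<And>i. i < n \<Longrightarrow> q i 1 * Y i 1 + q i (-1) * Y i (-1) = 0"
  shows "(\<Sum>x\<in>cube n. prod_weight q n x * norm (\<Sum>i<n. Y i (x i) *\<^sub>R v i) powr p)
    \<le> (2 * T) powr p * (\<Sum>i<n. (q i 1 * \<bar>Y i 1\<bar> powr p + q i (-1) * \<bar>Y i (-1)\<bar> powr p) * norm (v i) powr p)"
proof -
  let ?m = "\<lambda>i. q i 1 * \<bar>Y i 1\<bar> powr p + q i (-1) * \<bar>Y i (-1)\<bar> powr p"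
  have "(\<Sum>x\<in>cube n. prod_weight q n x * norm (\<Sum>i<n. Y i (x i) *\<^sub>R v i) powr p)
      \<le> T powr p * (\<Sum>i<n. norm (v i) powr p * (\<Sum>(x, y)\<in>cube n \<times> cube n.
          prod_weight q n x * prod_weight q n y * \<bar>Y i (x i) - Y i (y i)\<bar> powr p))"
    using decoupling_powr_le[OF p q mean0] rad_type_decoupled_le[OF T q] by (rule order_trans)
  also have "\<dots> \<le> T powr p * (\<Sum>i<n. norm (v i) powr p * (2 powr p * ?m i))"
    by (intro mult_left_mono sum_mono pair_moment_le[OF p q]) auto
  also have "\<dots> = (2 * T) powr p * (\<Sum>i<n. ?m i * norm (v i) powr p)"
    using rad_type_constsD(1)[OF T] by (simp add: powr_mult sum_distrib_left mult_ac)
  finally show ?thesis .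
qed

section \<open>The interpolating noise semigroup\<close>

text \<open>bern \<alpha> i b is \<mu>_{\<alpha>_i}{b}, and noise \<alpha> i s a b is the matrix entry (a, b) of the i-th
  tensor factor s Id + (1 - s) E_{\<mu>_{\<alpha>_i}} of P_s; noise_score is the logarithmic derivative of
  noise in s.\<close>

definition bern :: "(nat \<Rightarrow> real) \<Rightarrow> nat \<Rightarrow> real \<Rightarrow> real" where
  "bern \<alpha> i b = (if b = 1 then \<alpha> i else 1 - \<alpha> i)"

definition noise :: "(nat \<Rightarrow> real) \<Rightarrow> nat \<Rightarrow> real \<Rightarrow> real \<Rightarrow> real \<Rightarrow> real" where
  "noise \<alpha> i s a b = (if a = b then s else 0) + (1 - s) * bern \<alpha> i b"

definition noise_deriv :: "(nat \<Rightarrow> real) \<Rightarrow> nat \<Rightarrow> real \<Rightarrow> real \<Rightarrow> real" where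
  "noise_deriv \<alpha> i a b = (if a = b then 1 else 0) - bern \<alpha> i b"

definition noise_score :: "(nat \<Rightarrow> real) \<Rightarrow> nat \<Rightarrow> real \<Rightarrow> real \<Rightarrow> real \<Rightarrow> real" where
  "noise_score \<alpha> i s a b = noise_deriv \<alpha> i a b / noise \<alpha> i s a b"

definition noise_kernel :: "(nat \<Rightarrow> real) \<Rightarrow> nat \<Rightarrow> real \<Rightarrow> (nat \<Rightarrow> real) \<Rightarrow> (nat \<Rightarrow> real) \<Rightarrow> real" where
  "noise_kernel \<alpha> n s x = prod_weight (\<lambda>i. noise \<alpha> i s (x i)) n"

definition noise_kernel_deriv :: "(nat \<Rightarrow> real) \<Rightarrow> nat \<Rightarrow> real \<Rightarrow> (nat \<Rightarrow> real) \<Rightarrow> (nat \<Rightarrow> real) \<Rightarrow> real" where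
  "noise_kernel_deriv \<alpha> n s x \<xi> =
    (\<Sum>i<n. noise_deriv \<alpha> i (x i) (\<xi> i) * (\<Prod>j\<in>{..<n} - {i}. noise \<alpha> j s (x j) (\<xi> j)))"

definition noise_op_deriv :: "(nat \<Rightarrow> real) \<Rightarrow> nat \<Rightarrow> ((nat \<Rightarrow> real) \<Rightarrow> 'a::real_normed_vector) \<Rightarrow> real \<Rightarrow> (nat \<Rightarrow> real) \<Rightarrow> 'a" where
  "noise_op_deriv \<alpha> n f s x = (\<Sum>\<xi>\<in>cube n. noise_kernel_deriv \<alpha> n s x \<xi> *\<^sub>R f \<xi>)"

lemma mu_eq_prod_weight: "mu \<alpha> n = prod_weight (bern \<alpha>) n"
  unfolding mu_def prod_weight_def bern_def by (simp add: fun_eq_iff)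

lemma coord_probs_bern: "\<forall>i<n. 0 < \<alpha> i \<and> \<alpha> i < 1 \<Longrightarrow> coord_probs n (bern \<alpha>)"
  unfolding coord_probs_def bern_def by force

lemma mu_nonneg: "\<forall>i<n. 0 < \<alpha> i \<and> \<alpha> i < 1 \<Longrightarrow> x \<in> cube n \<Longrightarrow> 0 \<le> mu \<alpha> n x"
  unfolding mu_eq_prod_weight by (intro prod_weight_nonneg coord_probs_bern)

lemma noise_pos: "0 < \<alpha> i \<Longrightarrow> \<alpha> i < 1 \<Longrightarrow> 0 \<le> s \<Longrightarrow> s < 1 \<Longrightarrow> 0 < noise \<alpha> i s a b"
  unfolding noise_def bern_def by (auto intro: add_nonneg_pos)

lemma coord_probs_noise:
  assumes "\<forall>i<n. 0 < \<alpha> i \<and> \<alpha> i < 1" "0 \<le> s" "s < 1" "x \<in> cube n"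
  shows "coord_probs n (\<lambda>i. noise \<alpha> i s (x i))"
proof -
  have "noise \<alpha> i s a 1 + noise \<alpha> i s a (-1) = 1" if "a = 1 \<or> a = -1" for i a
    using that by (auto simp: noise_def bern_def algebra_simps)
  then show ?thesis
    using assms noise_pos[of \<alpha> _ s] cube_coord[OF assms(4)]
    unfolding coord_probs_def by (auto intro: less_imp_le)
qed

lemma noise_reversible: "bern \<alpha> i a * noise \<alpha> i s a b = bern \<alpha> i b * noise \<alpha> i s b a"
  unfolding noise_def by (auto simp: algebra_simps)

lemma noise_kernel_reversible: "mu \<alpha> n x * noise_kernel \<alpha> n s x \<xi> = mu \<alpha> n \<xi> * noise_kernel \<alpha> n s \<xi> x"
  unfolding mu_eq_prod_weight noise_kernel_def prod_weight_def prod.distrib[symmetric]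
  by (intro prod.cong refl noise_reversible)

lemma noise_two_point:
  assumes b: "b = 1 \<or> b = -1" and \<alpha>: "0 < \<alpha> i" "\<alpha> i < 1" and s: "s < 1"
  defines "m \<equiv> bern \<alpha> i b"
  shows "noise \<alpha> i s b b = s + (1 - s) * m"
    and "noise \<alpha> i s b (- b) = (1 - s) * (1 - m)"
    and "noise_score \<alpha> i s b b = (1 - m) / (s + (1 - s) * m)"
    and "noise_score \<alpha> i s (- b) b = - 1 / (1 - s)"
    and "0 < m" "m < 1"
proof -
  have m: "0 < m" "m < 1" "bern \<alpha> i (- b) = 1 - m"
    using b \<alpha> unfolding m_def bern_def by auto
  then show "noise \<alpha> i s b b = s + (1 - s) * m" "noise \<alpha> i s b (- b) = (1 - s) * (1 - m)"
    "noise_score \<alpha> i s b b = (1 - m) / (s + (1 - s) * m)" "0 < m" "m < 1"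
    using b unfolding noise_score_def noise_deriv_def noise_def m_def by auto
  show "noise_score \<alpha> i s (- b) b = - 1 / (1 - s)"
    using b m s unfolding noise_score_def noise_deriv_def noise_def m_def by auto
qed

lemma sum_sign_pair:
  fixes g :: "real \<Rightarrow> 'a::ab_semigroup_add"
  shows "b = 1 \<or> b = -1 \<Longrightarrow> g 1 + g (-1) = g b + g (- b)"
  by (auto simp: add.commute)

lemma noise_score_mean_zero:
  assumes b: "b = 1 \<or> b = -1" and \<alpha>: "0 < \<alpha> i" "\<alpha> i < 1" and s: "0 < s" "s < 1"
  shows "noise \<alpha> i s b 1 * noise_score \<alpha> i s 1 b + noise \<alpha> i s b (-1) * noise_score \<alpha> i s (-1) b = 0"
proof -
  note two_point = noise_two_point[where \<alpha> = \<alpha> and i = i and s = s, OF b \<alpha> s(2)]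
  have "0 < s + (1 - s) * bern \<alpha> i b"
    using two_point(5) s by (simp add: add_pos_nonneg)
  then show ?thesis
    using s unfolding sum_sign_pair[OF b, of "\<lambda>a. noise \<alpha> i s b a * noise_score \<alpha> i s a b"]
    by (simp add: two_point field_simps)
qed

lemma noise_score_moment_le:
  assumes b: "b = 1 \<or> b = -1" and \<alpha>: "0 < \<alpha> i" "\<alpha> i < 1" and s: "0 < s" "s < 1"
    and p: "1 \<le> p" "p \<le> 2"
  shows "noise \<alpha> i s b 1 * \<bar>noise_score \<alpha> i s 1 b\<bar> powr p
      + noise \<alpha> i s b (-1) * \<bar>noise_score \<alpha> i s (-1) b\<bar> powr p \<le> (1 / sqrt (s * (1 - s))) powr p"
proof -
  note two_point = noise_two_point[where \<alpha> = \<alpha> and i = i and s = s, OF b \<alpha> s(2)]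
  show ?thesis
    unfolding sum_sign_pair[OF b, of "\<lambda>a. noise \<alpha> i s b a * \<bar>noise_score \<alpha> i s a b\<bar> powr p"]
    using two_point_moment_le[OF s two_point(5,6) p] by (simp add: two_point)
qed

lemma sum_cube_odd_scaleR_partial:
  fixes f :: "(nat \<Rightarrow> real) \<Rightarrow> 'a::real_normed_vector"
  assumes i: "i < n" and odd: "\<And>\<xi>. \<xi> \<in> cube n \<Longrightarrow> c (\<xi>(i := - \<xi> i)) = - c \<xi>"
  shows "(\<Sum>\<xi>\<in>cube n. c \<xi> *\<^sub>R f \<xi>) = (\<Sum>\<xi>\<in>cube n. c \<xi> *\<^sub>R partial i \<beta> f \<xi>)"
proof -
  define g where "g \<xi> = \<beta> *\<^sub>R f (\<xi>(i := 1)) + (1 - \<beta>) *\<^sub>R f (\<xi>(i := -1))" for \<xi>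
  define Z where "Z = (\<Sum>\<xi>\<in>cube n. c \<xi> *\<^sub>R g \<xi>)"
  have "Z = (\<Sum>\<xi>\<in>cube n. c (\<xi>(i := - \<xi> i)) *\<^sub>R g (\<xi>(i := - \<xi> i)))"
    unfolding Z_def by (rule sum_cube_flip[OF i])
  also have "\<dots> = - Z"
    unfolding Z_def g_def by (simp add: odd sum_negf[symmetric])
  finally have "Z = 0"
    by (simp add: eq_neg_iff_add_eq_0 scaleR_2[symmetric])
  moreover have "f \<xi> = partial i \<beta> f \<xi> + g \<xi>" for \<xi>
    unfolding partial_def g_def by simp
  ultimately show ?thesis
    unfolding Z_def by (simp add: scaleR_add_right sum.distrib)
qed

lemma noise_deriv_flip:
  "a = 1 \<or> a = -1 \<Longrightarrow> b = 1 \<or> b = -1 \<Longrightarrow> noise_deriv \<alpha> i a (- b) = - noise_deriv \<alpha> i a b"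
  unfolding noise_deriv_def bern_def by auto

lemma noise_op_deriv_eq:
  fixes f :: "(nat \<Rightarrow> real) \<Rightarrow> 'a::real_normed_vector"
  assumes \<alpha>: "\<forall>i<n. 0 < \<alpha> i \<and> \<alpha> i < 1" and s: "0 \<le> s" "s < 1" and x: "x \<in> cube n"
  shows "noise_op_deriv \<alpha> n f s x = (\<Sum>\<xi>\<in>cube n. noise_kernel \<alpha> n s x \<xi> *\<^sub>R
            (\<Sum>i<n. noise_score \<alpha> i s (x i) (\<xi> i) *\<^sub>R partial i (\<alpha> i) f \<xi>))"
proof -
  define c where "c i \<xi> = noise_deriv \<alpha> i (x i) (\<xi> i) * (\<Prod>j\<in>{..<n} - {i}. noise \<alpha> j s (x j) (\<xi> j))"
    for i \<xi>
  have odd: "c i (\<xi>(i := - \<xi> i)) = - c i \<xi>" if "i < n" "\<xi> \<in> cube n" for i \<xi>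
  proof -
    have "(\<Prod>j\<in>{..<n} - {i}. noise \<alpha> j s (x j) ((\<xi>(i := - \<xi> i)) j))
        = (\<Prod>j\<in>{..<n} - {i}. noise \<alpha> j s (x j) (\<xi> j))"
      by (intro prod.cong) auto
    then show ?thesis
      using noise_deriv_flip[OF cube_coord[OF x] cube_coord, OF that(1) that(2) that(1)]
      unfolding c_def by simp
  qed
  have factor: "c i \<xi> = noise_kernel \<alpha> n s x \<xi> * noise_score \<alpha> i s (x i) (\<xi> i)" if "i < n" for i \<xi>
    using that noise_pos[of \<alpha> i s "x i" "\<xi> i"] \<alpha> s
    unfolding c_def noise_kernel_def prod_weight_def noise_score_def
    by (simp add: prod.remove[of "{..<n}" i] field_simps)
  have "noise_op_deriv \<alpha> n f s x = (\<Sum>\<xi>\<in>cube n. \<Sum>i<n. c i \<xi> *\<^sub>R f \<xi>)"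
    unfolding noise_op_deriv_def noise_kernel_deriv_def c_def by (simp add: scaleR_sum_left)
  also have "\<dots> = (\<Sum>i<n. \<Sum>\<xi>\<in>cube n. c i \<xi> *\<^sub>R f \<xi>)"
    by (rule sum.swap)
  also have "\<dots> = (\<Sum>i<n. \<Sum>\<xi>\<in>cube n. c i \<xi> *\<^sub>R partial i (\<alpha> i) f \<xi>)"
    using odd by (intro sum.cong refl sum_cube_odd_scaleR_partial) auto
  also have "\<dots> = (\<Sum>\<xi>\<in>cube n. \<Sum>i<n. c i \<xi> *\<^sub>R partial i (\<alpha> i) f \<xi>)"
    by (rule sum.swap)
  finally show ?thesis
    using factor by (simp add: scaleR_sum_right)
qed

lemma noise_score_fibre_le:
  fixes v :: "nat \<Rightarrow> 'a::real_normed_vector"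
  assumes p: "1 \<le> p" "p \<le> 2" and T: "T \<in> rad_type_consts TYPE('a) p"
    and \<alpha>: "\<forall>i<n. 0 < \<alpha> i \<and> \<alpha> i < 1" and s: "0 < s" "s < 1" and \<xi>: "\<xi> \<in> cube n"
  shows "(\<Sum>x\<in>cube n. noise_kernel \<alpha> n s \<xi> x * norm (\<Sum>i<n. noise_score \<alpha> i s (x i) (\<xi> i) *\<^sub>R v i) powr p)
    \<le> (2 * T * (1 / sqrt (s * (1 - s)))) powr p * (\<Sum>i<n. norm (v i) powr p)"
proof -
  define H where "H = 1 / sqrt (s * (1 - s))"
  have "(\<Sum>x\<in>cube n. noise_kernel \<alpha> n s \<xi> x * norm (\<Sum>i<n. noise_score \<alpha> i s (x i) (\<xi> i) *\<^sub>R v i) powr p)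
      \<le> (2 * T) powr p * (\<Sum>i<n. (noise \<alpha> i s (\<xi> i) 1 * \<bar>noise_score \<alpha> i s 1 (\<xi> i)\<bar> powr p
          + noise \<alpha> i s (\<xi> i) (-1) * \<bar>noise_score \<alpha> i s (-1) (\<xi> i)\<bar> powr p) * norm (v i) powr p)"
    unfolding noise_kernel_def
    using \<alpha> s cube_coord[OF \<xi>] coord_probs_noise[OF \<alpha> less_imp_le[OF s(1)] s(2) \<xi>]
    by (intro rad_type_mean_zero_coords[OF p(1) T] noise_score_mean_zero) auto
  also have "\<dots> \<le> (2 * T) powr p * (\<Sum>i<n. H powr p * norm (v i) powr p)"
    unfolding H_def using \<alpha> s p cube_coord[OF \<xi>]
    by (intro mult_left_mono sum_mono mult_right_mono noise_score_moment_le) auto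
  also have "\<dots> = (2 * T * H) powr p * (\<Sum>i<n. norm (v i) powr p)"
    by (simp add: powr_mult sum_distrib_left mult_ac)
  finally show ?thesis
    unfolding H_def .
qed

text \<open>Jensen for the kernel in x, reversibility to exchange x and \<xi>, then the type estimate
  on each fibre \<xi>.\<close>
lemma noise_op_deriv_moment_le:
  fixes f :: "(nat \<Rightarrow> real) \<Rightarrow> 'a::real_normed_vector"
  assumes p: "1 \<le> p" "p \<le> 2" and T: "T \<in> rad_type_consts TYPE('a) p"
    and \<alpha>: "\<forall>i<n. 0 < \<alpha> i \<and> \<alpha> i < 1" and s: "0 < s" "s < 1"
  shows "(\<Sum>x\<in>cube n. mu \<alpha> n x * norm (noise_op_deriv \<alpha> n f s x) powr p)
    \<le> (2 * T * (1 / sqrt (s * (1 - s)))) powr p *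
        (\<Sum>i<n. \<Sum>x\<in>cube n. mu \<alpha> n x * norm (partial i (\<alpha> i) f x) powr p)"
proof -
  define C where "C = (2 * T * (1 / sqrt (s * (1 - s)))) powr p"
  define V where "V x \<xi> = (\<Sum>i<n. noise_score \<alpha> i s (x i) (\<xi> i) *\<^sub>R partial i (\<alpha> i) f \<xi>)" for x \<xi>
  have jensen: "norm (noise_op_deriv \<alpha> n f s x) powr p \<le> (\<Sum>\<xi>\<in>cube n. noise_kernel \<alpha> n s x \<xi> * norm (V x \<xi>) powr p)"
    if x: "x \<in> cube n" for x
    unfolding noise_op_deriv_eq[OF \<alpha> less_imp_le[OF s(1)] s(2) x] V_def noise_kernel_def
    using coord_probs_noise[OF \<alpha> less_imp_le[OF s(1)] s(2) x] p
    by (intro norm_sum_powr_le prod_weight_nonneg sum_prod_weight_eq_1) auto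
  have "(\<Sum>x\<in>cube n. mu \<alpha> n x * norm (noise_op_deriv \<alpha> n f s x) powr p)
      \<le> (\<Sum>x\<in>cube n. mu \<alpha> n x * (\<Sum>\<xi>\<in>cube n. noise_kernel \<alpha> n s x \<xi> * norm (V x \<xi>) powr p))"
    using jensen mu_nonneg[OF \<alpha>] by (intro sum_mono mult_left_mono) auto
  also have "\<dots> = (\<Sum>x\<in>cube n. \<Sum>\<xi>\<in>cube n. mu \<alpha> n \<xi> * (noise_kernel \<alpha> n s \<xi> x * norm (V x \<xi>) powr p))"
    by (simp add: sum_distrib_left mult.assoc[symmetric] noise_kernel_reversible)
  also have "\<dots> = (\<Sum>\<xi>\<in>cube n. mu \<alpha> n \<xi> * (\<Sum>x\<in>cube n. noise_kernel \<alpha> n s \<xi> x * norm (V x \<xi>) powr p))"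
    by (subst sum.swap) (simp add: sum_distrib_left)
  also have "\<dots> \<le> (\<Sum>\<xi>\<in>cube n. mu \<alpha> n \<xi> * (C * (\<Sum>i<n. norm (partial i (\<alpha> i) f \<xi>) powr p)))"
    unfolding V_def C_def using mu_nonneg[OF \<alpha>]
    by (intro sum_mono mult_left_mono noise_score_fibre_le[OF p T \<alpha> s]) auto
  also have "\<dots> = C * (\<Sum>x\<in>cube n. \<Sum>i<n. mu \<alpha> n x * norm (partial i (\<alpha> i) f x) powr p)"
    by (simp add: sum_distrib_left mult_ac)
  also have "\<dots> = C * (\<Sum>i<n. \<Sum>x\<in>cube n. mu \<alpha> n x * norm (partial i (\<alpha> i) f x) powr p)"
    by (subst sum.swap) (rule refl)
  finally show ?thesis
    unfolding C_def .
qed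

section \<open>Riemann sums\<close>

lemma riemann_sum_error_le:
  fixes \<phi> \<phi>' :: "real \<Rightarrow> real" and t \<tau> :: "nat \<Rightarrow> real"
  assumes der: "\<And>x. (\<phi> has_real_derivative \<phi>' x) (at x)"
    and t: "t 0 = 0" "t N = 1" "\<And>k. k < N \<Longrightarrow> t k < t (Suc k)"
    and osc: "\<And>k y. k < N \<Longrightarrow> t k \<le> y \<Longrightarrow> y \<le> t (Suc k) \<Longrightarrow> \<bar>\<phi>' (\<tau> k) - \<phi>' y\<bar> \<le> \<epsilon>"
  shows "\<bar>(\<Sum>k<N. (t (Suc k) - t k) * \<phi>' (\<tau> k)) - (\<phi> 1 - \<phi> 0)\<bar> \<le> \<epsilon>"
proof -
  have "\<exists>z. t k \<le> z \<and> z \<le> t (Suc k) \<and> \<phi> (t (Suc k)) - \<phi> (t k) = (t (Suc k) - t k) * \<phi>' z"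
    if "k < N" for k
    using MVT2[OF t(3)[OF that] der] by (auto intro: less_imp_le)
  then obtain z where z: "\<And>k. k < N \<Longrightarrow> t k \<le> z k \<and> z k \<le> t (Suc k)
      \<and> \<phi> (t (Suc k)) - \<phi> (t k) = (t (Suc k) - t k) * \<phi>' (z k)"
    by metis
  have "\<phi> 1 - \<phi> 0 = (\<Sum>k<N. (t (Suc k) - t k) * \<phi>' (z k))"
    using sum_lessThan_telescope[of "\<lambda>k. \<phi> (t k)" N] t z by simp
  then have "\<bar>(\<Sum>k<N. (t (Suc k) - t k) * \<phi>' (\<tau> k)) - (\<phi> 1 - \<phi> 0)\<bar>
      = \<bar>\<Sum>k<N. (t (Suc k) - t k) * (\<phi>' (\<tau> k) - \<phi>' (z k))\<bar>"
    by (simp add: sum_subtractf right_diff_distrib)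
  also have "\<dots> \<le> (\<Sum>k<N. (t (Suc k) - t k) * \<epsilon>)"
  proof (rule order_trans[OF sum_abs], rule sum_mono)
    fix k
    assume "k \<in> {..<N}"
    then have "0 < t (Suc k) - t k" "\<bar>\<phi>' (\<tau> k) - \<phi>' (z k)\<bar> \<le> \<epsilon>"
      using t(3) z osc by auto
    then show "\<bar>(t (Suc k) - t k) * (\<phi>' (\<tau> k) - \<phi>' (z k))\<bar> \<le> (t (Suc k) - t k) * \<epsilon>"
      by (simp add: abs_mult mult_left_mono)
  qed
  also have "\<dots> = \<epsilon>"
    using sum_lessThan_telescope[of t N] t by (simp add: sum_distrib_right[symmetric])
  finally show ?thesis .
qed

lemma riemann_sum_tendsto:
  fixes \<phi> \<phi>' :: "real \<Rightarrow> real" and t \<tau> :: "nat \<Rightarrow> nat \<Rightarrow> real" and h :: "nat \<Rightarrow> real"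
  assumes der: "\<And>x. (\<phi> has_real_derivative \<phi>' x) (at x)" and cont: "continuous_on {0..1} \<phi>'"
    and ends: "\<And>N. t N 0 = 0" "\<And>N. 0 < N \<Longrightarrow> t N N = 1"
    and range: "\<And>N k. k \<le> N \<Longrightarrow> 0 \<le> t N k \<and> t N k \<le> 1"
    and step: "\<And>N k. k < N \<Longrightarrow> t N k < t N (Suc k) \<and> t N (Suc k) - t N k \<le> h N"
    and tag: "\<And>N k. k < N \<Longrightarrow> t N k \<le> \<tau> N k \<and> \<tau> N k \<le> t N (Suc k)"
    and mesh: "h \<longlonglongrightarrow> 0"
  shows "(\<lambda>N. \<Sum>k<N. (t N (Suc k) - t N k) * \<phi>' (\<tau> N k)) \<longlonglongrightarrow> \<phi> 1 - \<phi> 0"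
proof (rule LIMSEQ_I)
  fix r :: real
  assume "0 < r"
  then obtain d where d: "0 < d"
    and ucont: "\<And>x y. x \<in> {0..1} \<Longrightarrow> y \<in> {0..1} \<Longrightarrow> dist y x < d \<Longrightarrow> dist (\<phi>' y) (\<phi>' x) < r / 2"
    using uniformly_continuous_onE[OF compact_uniformly_continuous[OF cont compact_Icc], of "r / 2"]
    by (metis half_gt_zero)
  obtain M where M: "\<And>N. M \<le> N \<Longrightarrow> \<bar>h N\<bar> < d"
    using LIMSEQ_D[OF mesh d] by auto
  have "\<bar>(\<Sum>k<N. (t N (Suc k) - t N k) * \<phi>' (\<tau> N k)) - (\<phi> 1 - \<phi> 0)\<bar> \<le> r / 2"
    if N: "Suc M \<le> N" for N
  proof (rule riemann_sum_error_le[where t = "t N" and \<tau> = "\<tau> N" and N = N, OF der ends(1)])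
    show "t N N = 1"
      using N by (intro ends(2)) auto
    fix k y
    assume k: "k < N" and y: "t N k \<le> y" "y \<le> t N (Suc k)"
    have "\<bar>y - \<tau> N k\<bar> < d"
      using step[OF k] tag[OF k] M[of N] N y by auto
    moreover have "y \<in> {0..1}" "\<tau> N k \<in> {0..1}"
      using range[of k N] range[of "Suc k" N] tag[OF k] k y by auto
    ultimately show "\<bar>\<phi>' (\<tau> N k) - \<phi>' y\<bar> \<le> r / 2"
      using ucont[of "\<tau> N k" y] by (simp add: dist_real_def abs_minus_commute)
  qed (use step in auto)
  then show "\<exists>M. \<forall>N\<ge>M. norm ((\<Sum>k<N. (t N (Suc k) - t N k) * \<phi>' (\<tau> N k)) - (\<phi> 1 - \<phi> 0)) < r"
    using \<open>0 < r\<close> by (intro exI[of _ "Suc M"]) (force simp: field_simps)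
qed

lemma sin_squared_diff: "(sin (a::real))\<^sup>2 - (sin b)\<^sup>2 = sin (a + b) * sin (a - b)"
proof -
  have "sin (a + b) * sin (a - b) = (sin a)\<^sup>2 * (cos b)\<^sup>2 - (cos a)\<^sup>2 * (sin b)\<^sup>2"
    unfolding sin_add sin_diff by (simp add: power2_eq_square algebra_simps)
  also have "\<dots> = (sin a)\<^sup>2 - (sin b)\<^sup>2"
    by (simp add: cos_squared_eq algebra_simps)
  finally show ?thesis
    by simp
qed

text \<open>The partition of [0, 1] by s = (sin \<theta>)^2 with \<theta> equally spaced in [0, \<pi>/2]. Each step,
  weighted by 1 / sqrt (s (1 - s)) at its midpoint, has length exactly 2 sin (\<pi> / 2N) \<le> \<pi> / N:
  this is how the integral of 1 / sqrt (s (1 - s)) over [0, 1], which is \<pi>, enters without an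
  improper integral.\<close>

definition sin_node :: "nat \<Rightarrow> nat \<Rightarrow> real" where
  "sin_node N k = (sin (pi * real k / (2 * real N)))\<^sup>2"

definition sin_mid :: "nat \<Rightarrow> nat \<Rightarrow> real" where
  "sin_mid N k = (sin (pi * (2 * real k + 1) / (4 * real N)))\<^sup>2"

lemma sin_node_0 [simp]: "sin_node N 0 = 0"
  unfolding sin_node_def by simp

lemma sin_node_N: "0 < N \<Longrightarrow> sin_node N N = 1"
  unfolding sin_node_def by simp

lemma sin_node_bounds: "0 \<le> sin_node N k" "sin_node N k \<le> 1"
  unfolding sin_node_def by (auto simp: abs_square_le_1)

lemma mid_angle_sin_cos_pos:
  assumes "k < N"
  defines "\<phi> \<equiv> pi * (2 * real k + 1) / (4 * real N)"
  shows "0 < sin \<phi>" "0 < cos \<phi>"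
proof -
  have "pi * (2 * real k + 1) < pi * (2 * real N)"
    using assms by (intro mult_strict_left_mono) auto
  then have "0 < \<phi>" "\<phi> < pi / 2"
    using assms unfolding \<phi>_def by (simp_all add: divide_less_eq)
  then show "0 < sin \<phi>" "0 < cos \<phi>"
    by (auto intro: sin_gt_zero cos_gt_zero)
qed

lemma sin_half_step_bounds:
  assumes "0 < N"
  shows "0 < sin (pi / (2 * real N))" "sin (pi / (2 * real N)) \<le> pi / (2 * real N)"
proof -
  have "pi * 1 < pi * (2 * real N)"
    using assms by (intro mult_strict_left_mono) auto
  then have "0 < pi / (2 * real N)" "pi / (2 * real N) < pi"
    using assms by (simp_all add: divide_less_eq)
  then show "0 < sin (pi / (2 * real N))" "sin (pi / (2 * real N)) \<le> pi / (2 * real N)"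
    by (auto intro: sin_gt_zero sin_x_le_x)
qed

lemma sin_node_diff:
  fixes N k :: nat
  assumes "0 < N"
  defines "\<phi> \<equiv> pi * (2 * real k + 1) / (4 * real N)"
  shows "sin_node N (Suc k) - sin_node N k = 2 * sin \<phi> * cos \<phi> * sin (pi / (2 * real N))"
proof -
  have "pi * real (Suc k) / (2 * real N) + pi * real k / (2 * real N) = 2 * \<phi>"
    "pi * real (Suc k) / (2 * real N) - pi * real k / (2 * real N) = pi / (2 * real N)"
    using assms by (simp_all add: field_simps)
  then show ?thesis
    unfolding sin_node_def sin_squared_diff by (simp add: sin_double)
qed

lemma sin_node_diff_pos: "k < N \<Longrightarrow> 0 < sin_node N (Suc k) - sin_node N k"
  using mid_angle_sin_cos_pos[of k N] sin_half_step_bounds[of N]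
  by (simp add: sin_node_diff)

lemma sin_node_diff_le: "k < N \<Longrightarrow> sin_node N (Suc k) - sin_node N k \<le> pi / (2 * real N)"
proof -
  assume k: "k < N"
  define \<phi> where "\<phi> = pi * (2 * real k + 1) / (4 * real N)"
  let ?h = "sin (pi / (2 * real N))"
  have "2 * sin \<phi> * cos \<phi> \<le> 1"
    using sin_double[of \<phi>] sin_le_one[of "2 * \<phi>"] by simp
  then have "2 * sin \<phi> * cos \<phi> * ?h \<le> 1 * ?h"
    using sin_half_step_bounds[of N] k by (intro mult_right_mono) auto
  then show ?thesis
    using sin_half_step_bounds[of N] k
    unfolding sin_node_diff[OF order.strict_trans1[OF le0 k]] \<phi>_def[symmetric] by linarith
qed

lemma sin_mid_between:
  assumes "k < N"
  shows "sin_node N k \<le> sin_mid N k" "sin_mid N k \<le> sin_node N (Suc k)"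
proof -
  define a b \<phi> where "a = pi * real k / (2 * real N)" and "b = pi * real (Suc k) / (2 * real N)"
    and "\<phi> = pi * (2 * real k + 1) / (4 * real N)"
  have "0 \<le> a" "a \<le> \<phi>" "\<phi> \<le> b"
    using assms unfolding a_def b_def \<phi>_def by (simp_all add: field_simps)
  moreover have "pi * (real k + 1) \<le> pi * real N"
    using assms by (intro mult_left_mono) auto
  then have "b \<le> pi / 2"
    using assms unfolding b_def by (simp add: field_simps)
  ultimately have "0 \<le> sin a" "sin a \<le> sin \<phi>" "sin \<phi> \<le> sin b"
    by (auto intro!: sin_ge_zero sin_monotone_2pi_le)
  then show "sin_node N k \<le> sin_mid N k" "sin_mid N k \<le> sin_node N (Suc k)"
    unfolding sin_node_def sin_mid_def a_def[symmetric] b_def[symmetric] \<phi>_def[symmetric]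
    by (auto intro: power_mono)
qed

lemma sin_mid_bounds:
  assumes "k < N"
  shows "0 < sin_mid N k \<and> sin_mid N k < 1"
proof -
  define \<phi> where "\<phi> = pi * (2 * real k + 1) / (4 * real N)"
  have "0 < (sin \<phi>)\<^sup>2" "0 < (cos \<phi>)\<^sup>2"
    using mid_angle_sin_cos_pos[OF assms] unfolding \<phi>_def by auto
  then show ?thesis
    using sin_squared_eq[of \<phi>] unfolding sin_mid_def \<phi>_def[symmetric] by linarith
qed

lemma sin_node_diff_weight:
  assumes "k < N"
  shows "(sin_node N (Suc k) - sin_node N k) * (1 / sqrt (sin_mid N k * (1 - sin_mid N k)))
    = 2 * sin (pi / (2 * real N))"
proof -
  define \<phi> where "\<phi> = pi * (2 * real k + 1) / (4 * real N)"
  have "0 < sin \<phi>" "0 < cos \<phi>"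
    using mid_angle_sin_cos_pos[OF assms] unfolding \<phi>_def by auto
  moreover have "sqrt (sin_mid N k * (1 - sin_mid N k)) = sin \<phi> * cos \<phi>"
    using calculation unfolding sin_mid_def \<phi>_def[symmetric]
    by (simp add: cos_squared_eq[symmetric] power_mult_distrib[symmetric])
  ultimately show ?thesis
    unfolding sin_node_diff[OF order.strict_trans1[OF le0 assms]] \<phi>_def[symmetric] by simp
qed

section \<open>Integration along the semigroup\<close>

lemma noise_affine: "noise \<alpha> i s a b = bern \<alpha> i b + s * noise_deriv \<alpha> i a b"
  unfolding noise_def noise_deriv_def by (auto simp: algebra_simps)

lemma noise_kernel_has_derivative:
  "((\<lambda>s. noise_kernel \<alpha> n s x \<xi>) has_real_derivative noise_kernel_deriv \<alpha> n s x \<xi>) (at s)"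
proof -
  have "((\<lambda>s. noise \<alpha> i s (x i) (\<xi> i)) has_derivative (*) (noise_deriv \<alpha> i (x i) (\<xi> i))) (at s)" for i
    unfolding noise_affine
    by (rule has_field_derivative_imp_has_derivative) (rule derivative_eq_intros | simp)+
  then have "((\<lambda>s. \<Prod>i<n. noise \<alpha> i s (x i) (\<xi> i)) has_derivative
      (\<lambda>y. \<Sum>i<n. (noise_deriv \<alpha> i (x i) (\<xi> i) * y) * (\<Prod>j\<in>{..<n} - {i}. noise \<alpha> j s (x j) (\<xi> j)))) (at s)"
    by (rule has_derivative_prod)
  moreover have "(\<lambda>y. \<Sum>i<n. (noise_deriv \<alpha> i (x i) (\<xi> i) * y) * (\<Prod>j\<in>{..<n} - {i}. noise \<alpha> j s (x j) (\<xi> j)))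
      = (*) (noise_kernel_deriv \<alpha> n s x \<xi>)"
    by (simp add: fun_eq_iff noise_kernel_deriv_def sum_distrib_left mult_ac)
  ultimately show ?thesis
    unfolding has_field_derivative_def noise_kernel_def prod_weight_def by simp
qed

lemma continuous_on_noise_kernel_deriv: "continuous_on A (\<lambda>s. noise_kernel_deriv \<alpha> n s x \<xi>)"
  unfolding noise_kernel_deriv_def noise_affine by (intro continuous_intros)

lemma noise_kernel_1:
  assumes "x \<in> cube n" "\<xi> \<in> cube n"
  shows "noise_kernel \<alpha> n 1 x \<xi> = (if x = \<xi> then 1 else 0)"
proof (cases "x = \<xi>")
  case False
  then obtain j where "j < n" "x j \<noteq> \<xi> j"
    using cube_eqI[OF assms] by blast
  then show ?thesis
    unfolding noise_kernel_def prod_weight_def noise_def by auto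
qed (simp add: noise_kernel_def prod_weight_def noise_def)

lemma noise_kernel_0: "noise_kernel \<alpha> n 0 x \<xi> = mu \<alpha> n \<xi>"
  unfolding noise_kernel_def noise_def mu_eq_prod_weight prod_weight_def by simp

lemma noise_riemann_sum_tendsto:
  fixes f :: "(nat \<Rightarrow> real) \<Rightarrow> 'a::real_normed_vector"
  assumes x: "x \<in> cube n"
  shows "(\<lambda>N. \<Sum>k<N. (sin_node N (Suc k) - sin_node N k) *\<^sub>R noise_op_deriv \<alpha> n f (sin_mid N k) x)
    \<longlonglongrightarrow> f x - mu_int \<alpha> n f"
proof -
  have sums: "(\<Sum>k<N. (sin_node N (Suc k) - sin_node N k) *\<^sub>R noise_op_deriv \<alpha> n f (sin_mid N k) x)
      = (\<Sum>\<xi>\<in>cube n. (\<Sum>k<N. (sin_node N (Suc k) - sin_node N k) *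
          noise_kernel_deriv \<alpha> n (sin_mid N k) x \<xi>) *\<^sub>R f \<xi>)" for N
    unfolding noise_op_deriv_def
    by (simp add: scaleR_sum_right scaleR_sum_left sum.swap[of _ "{..<N}"])
  have "(\<lambda>N. \<Sum>k<N. (sin_node N (Suc k) - sin_node N k) * noise_kernel_deriv \<alpha> n (sin_mid N k) x \<xi>)
      \<longlonglongrightarrow> noise_kernel \<alpha> n 1 x \<xi> - noise_kernel \<alpha> n 0 x \<xi>" for \<xi>
  proof (rule riemann_sum_tendsto[OF noise_kernel_has_derivative continuous_on_noise_kernel_deriv])
    show "(\<lambda>N. pi / (2 * real N)) \<longlonglongrightarrow> 0"
      by real_asymp
  qed (use sin_node_N sin_node_bounds sin_node_diff_pos sin_node_diff_le sin_mid_between in auto)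
  then have "(\<lambda>N. \<Sum>\<xi>\<in>cube n. (\<Sum>k<N. (sin_node N (Suc k) - sin_node N k) *
          noise_kernel_deriv \<alpha> n (sin_mid N k) x \<xi>) *\<^sub>R f \<xi>)
      \<longlonglongrightarrow> (\<Sum>\<xi>\<in>cube n. (noise_kernel \<alpha> n 1 x \<xi> - noise_kernel \<alpha> n 0 x \<xi>) *\<^sub>R f \<xi>)"
    by (intro tendsto_intros)
  also have "(\<Sum>\<xi>\<in>cube n. (noise_kernel \<alpha> n 1 x \<xi> - noise_kernel \<alpha> n 0 x \<xi>) *\<^sub>R f \<xi>) = f x - mu_int \<alpha> n f"
  proof -
    have "(\<Sum>\<xi>\<in>cube n. (if x = \<xi> then 1 else 0) *\<^sub>R f \<xi>) = f x"
      using x by (simp add: if_distrib[of "\<lambda>c. c *\<^sub>R _"] cong: if_cong)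
    then show ?thesis
      using x by (simp add: noise_kernel_1 noise_kernel_0 scaleR_diff_left sum_subtractf mu_int_def
          cong: sum.cong)
  qed
  finally show ?thesis
    unfolding sums .
qed

lemma noise_riemann_term_moment_le:
  fixes f :: "(nat \<Rightarrow> real) \<Rightarrow> 'a::real_normed_vector"
  assumes p: "1 \<le> p" "p \<le> 2" and T: "T \<in> rad_type_consts TYPE('a) p"
    and \<alpha>: "\<forall>i<n. 0 < \<alpha> i \<and> \<alpha> i < 1" and k: "k < N"
  shows "(\<Sum>x\<in>cube n. mu \<alpha> n x *
          norm ((sin_node N (Suc k) - sin_node N k) *\<^sub>R noise_op_deriv \<alpha> n f (sin_mid N k) x) powr p)
    \<le> (2 * T * (2 * sin (pi / (2 * real N)))) powr p *
        (\<Sum>i<n. \<Sum>x\<in>cube n. mu \<alpha> n x * norm (partial i (\<alpha> i) f x) powr p)"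
proof -
  let ?D = "sin_node N (Suc k) - sin_node N k"
  let ?H = "1 / sqrt (sin_mid N k * (1 - sin_mid N k))"
  define S where "S = (\<Sum>i<n. \<Sum>x\<in>cube n. mu \<alpha> n x * norm (partial i (\<alpha> i) f x) powr p)"
  have "(\<Sum>x\<in>cube n. mu \<alpha> n x * norm (?D *\<^sub>R noise_op_deriv \<alpha> n f (sin_mid N k) x) powr p)
      = ?D powr p * (\<Sum>x\<in>cube n. mu \<alpha> n x * norm (noise_op_deriv \<alpha> n f (sin_mid N k) x) powr p)"
    using sin_node_diff_pos[OF k] by (simp add: powr_mult sum_distrib_left mult_ac)
  also have "\<dots> \<le> ?D powr p * ((2 * T * ?H) powr p * S)"
    unfolding S_def using sin_mid_bounds[OF k]
    by (intro mult_left_mono noise_op_deriv_moment_le[OF p T \<alpha>]) auto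
  also have "\<dots> = (?D * ?H * (2 * T)) powr p * S"
    by (simp only: powr_mult mult_ac)
  also have "\<dots> = (2 * T * (2 * sin (pi / (2 * real N)))) powr p * S"
    unfolding sin_node_diff_weight[OF k] by (simp only: mult_ac)
  finally show ?thesis
    unfolding S_def .
qed

lemma noise_riemann_sum_moment_le:
  fixes f :: "(nat \<Rightarrow> real) \<Rightarrow> 'a::real_normed_vector"
  assumes p: "1 \<le> p" "p \<le> 2" and T: "T \<in> rad_type_consts TYPE('a) p" "0 < T"
    and \<alpha>: "\<forall>i<n. 0 < \<alpha> i \<and> \<alpha> i < 1" and N: "0 < N"
  shows "(\<Sum>x\<in>cube n. mu \<alpha> n x * norm (\<Sum>k<N. (sin_node N (Suc k) - sin_node N k) *\<^sub>R
            noise_op_deriv \<alpha> n f (sin_mid N k) x) powr p)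
    \<le> (2 * pi * T) powr p * (\<Sum>i<n. \<Sum>x\<in>cube n. mu \<alpha> n x * norm (partial i (\<alpha> i) f x) powr p)"
proof -
  define S where "S = (\<Sum>i<n. \<Sum>x\<in>cube n. mu \<alpha> n x * norm (partial i (\<alpha> i) f x) powr p)"
  define c where "c = 2 * T * (2 * sin (pi / (2 * real N)))"
  have c: "0 < c"
    unfolding c_def using T(2) sin_half_step_bounds[OF N] by simp
  have "(\<Sum>x\<in>cube n. mu \<alpha> n x * norm (\<Sum>k<N. (sin_node N (Suc k) - sin_node N k) *\<^sub>R
            noise_op_deriv \<alpha> n f (sin_mid N k) x) powr p) \<le> (\<Sum>k<N. c) powr p * S"
    unfolding S_def c_def using mu_nonneg[OF \<alpha>] p c[unfolded c_def]
    by (intro Minkowski_powr_le noise_riemann_term_moment_le[OF p T(1) \<alpha>]) auto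
  also have "\<dots> \<le> (2 * pi * T) powr p * S"
  proof (intro mult_right_mono powr_mono2)
    have "real N * c \<le> real N * (2 * T * (2 * (pi / (2 * real N))))"
      unfolding c_def using T(2) sin_half_step_bounds[OF N] by (intro mult_left_mono) auto
    also have "\<dots> = 2 * pi * T"
      using N by (simp add: field_simps)
    finally show "(\<Sum>k<N. c) \<le> 2 * pi * T"
      by simp
  qed (use p c mu_nonneg[OF \<alpha>] in \<open>auto simp: S_def intro!: sum_nonneg\<close>)
  finally show ?thesis
    unfolding S_def .
qed

lemma poincare_le_rad_type_consts:
  fixes f :: "(nat \<Rightarrow> real) \<Rightarrow> 'a::real_normed_vector"
  assumes p: "1 \<le> p" "p \<le> 2" and T: "T \<in> rad_type_consts TYPE('a) p" "0 < T"
    and \<alpha>: "\<forall>i<n. 0 < \<alpha> i \<and> \<alpha> i < 1"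
  shows "(\<Sum>x\<in>cube n. mu \<alpha> n x * norm (f x - mu_int \<alpha> n f) powr p)
    \<le> (2 * pi * T) powr p * (\<Sum>i<n. \<Sum>x\<in>cube n. mu \<alpha> n x * norm (partial i (\<alpha> i) f x) powr p)"
proof (rule LIMSEQ_le_const2)
  show "(\<lambda>N. \<Sum>x\<in>cube n. mu \<alpha> n x * norm (\<Sum>k<N. (sin_node N (Suc k) - sin_node N k) *\<^sub>R
            noise_op_deriv \<alpha> n f (sin_mid N k) x) powr p)
      \<longlonglongrightarrow> (\<Sum>x\<in>cube n. mu \<alpha> n x * norm (f x - mu_int \<alpha> n f) powr p)"
  proof (intro tendsto_sum tendsto_mult_left)
    fix x
    assume "x \<in> cube n"
    then show "(\<lambda>N. norm (\<Sum>k<N. (sin_node N (Suc k) - sin_node N k) *\<^sub>R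
            noise_op_deriv \<alpha> n f (sin_mid N k) x) powr p) \<longlonglongrightarrow> norm (f x - mu_int \<alpha> n f) powr p"
      using p by (intro tendsto_powr' tendsto_norm noise_riemann_sum_tendsto) auto
  qed
qed (use noise_riemann_sum_moment_le[OF p T \<alpha>] in \<open>auto intro: exI[of _ 1]\<close>)

lemma rad_type_consts_mono:
  assumes T: "T \<in> rad_type_consts TYPE('a::real_normed_vector) p" and "T \<le> T'" and "0 \<le> p"
  shows "T' \<in> rad_type_consts TYPE('a) p"
  unfolding rad_type_consts_def
proof (intro CollectI conjI allI)
  show "0 \<le> T'"
    using rad_type_constsD(1)[OF T] assms(2) by simp
  fix n and v :: "nat \<Rightarrow> 'a"
  have "T powr p * (\<Sum>i<n. norm (v i) powr p) \<le> T' powr p * (\<Sum>i<n. norm (v i) powr p)"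
    using rad_type_constsD(1)[OF T] assms(2,3) by (intro mult_right_mono powr_mono2 sum_nonneg) auto
  then show "(\<Sum>x\<in>cube n. norm (\<Sum>i<n. x i *\<^sub>R v i) powr p) / 2 ^ n \<le> T' powr p * (\<Sum>i<n. norm (v i) powr p)"
    using rad_type_constsD(2)[OF T, where n = n and v = v] by linarith
qed

text \<open>Every constant above the infimum is admissible, so a bound that is continuous in the constant
  passes to the infimum.\<close>
lemma le_at_rad_type_const:
  fixes L S c :: real
  assumes A: "has_rad_type TYPE('a::real_normed_vector) p" and p: "0 < p" and c: "0 \<le> c"
    and bound: "\<And>T. T \<in> rad_type_consts TYPE('a) p \<Longrightarrow> 0 < T \<Longrightarrow> L \<le> (c * T) powr p * S"
  shows "L \<le> (c * rad_type_const TYPE('a) p) powr p * S"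
proof -
  let ?T0 = "rad_type_const TYPE('a) p"
  have ne: "rad_type_consts TYPE('a) p \<noteq> {}"
    using A unfolding has_rad_type_def .
  have T0: "0 \<le> ?T0"
    unfolding rad_type_const_def using ne rad_type_constsD(1) by (intro cInf_greatest) auto
  have above: "L \<le> (c * (?T0 + e)) powr p * S" if e: "0 < e" for e
  proof -
    obtain T where T: "T \<in> rad_type_consts TYPE('a) p" "T < ?T0 + e"
      using cInf_lessD[OF ne, of "?T0 + e"] e unfolding rad_type_const_def by auto
    have "?T0 + e \<in> rad_type_consts TYPE('a) p"
      using T(2) p by (intro rad_type_consts_mono[OF T(1)]) auto
    then show ?thesis
      using T0 e by (intro bound) auto
  qed
  have pos: "\<forall>\<^sub>F e in at_right (0::real). 0 < e"
    by (rule eventually_at_right_less)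
  have "((\<lambda>e. (c * (?T0 + e)) powr p * S) \<longlongrightarrow> (c * (?T0 + 0)) powr p * S) (at_right 0)"
  proof (intro tendsto_mult_right tendsto_powr')
    show "((\<lambda>e. c * (?T0 + e)) \<longlongrightarrow> c * (?T0 + 0)) (at_right 0)"
      by (intro tendsto_mult_left tendsto_add tendsto_const tendsto_ident_at)
    have "\<forall>\<^sub>F e in at_right 0. 0 \<le> c * (?T0 + e)"
      using pos by eventually_elim (use c T0 in simp)
    then show "c * (?T0 + 0) \<noteq> 0 \<or> 0 < p \<and> (\<forall>\<^sub>F e in at_right 0. 0 \<le> c * (?T0 + e))"
      using p by simp
  qed (rule tendsto_const)
  moreover have "\<forall>\<^sub>F e in at_right 0. L \<le> (c * (?T0 + e)) powr p * S"
    using pos by eventually_elim (rule above)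
  ultimately show ?thesis
    by (simp add: tendsto_lowerbound)
qed

theorem theorem3p3:
  fixes p :: real and n :: nat and \<alpha> :: "nat \<Rightarrow> real"
    and f :: "(nat \<Rightarrow> real) \<Rightarrow> 'a::real_normed_vector"
  assumes "1 \<le> p" and "p \<le> 2"
    and "has_rad_type TYPE('a) p"
    and "\<forall>i<n. 0 < \<alpha> i \<and> \<alpha> i < 1"
  shows "(\<Sum>x\<in>cube n. mu \<alpha> n x * norm (f x - mu_int \<alpha> n f) powr p)
     \<le> (2 * pi * rad_type_const TYPE('a) p) powr p *
        (\<Sum>i<n. \<Sum>x\<in>cube n. mu \<alpha> n x * norm (partial i (\<alpha> i) f x) powr p)"
proof (rule le_at_rad_type_const[OF assms(3)])
  show "0 < p" "0 \<le> 2 * pi"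
    using assms(1) by auto
  fix T
  assume "T \<in> rad_type_consts TYPE('a) p" "0 < T"
  then show "(\<Sum>x\<in>cube n. mu \<alpha> n x * norm (f x - mu_int \<alpha> n f) powr p)
      \<le> (2 * pi * T) powr p * (\<Sum>i<n. \<Sum>x\<in>cube n. mu \<alpha> n x * norm (partial i (\<alpha> i) f x) powr p)"
    by (rule poincare_le_rad_type_consts[OF assms(1,2) _ _ assms(4)])
qed

end
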